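(* Let $F$ be a field of characteristic different from $2$, let $a_1,a_2\in F^\times$ be such that $E=F(\sqrt{a_1},\sqrt{a_2})$ is Galois over $F$ with $G=\mathrm{Gal}(E/F)\cong\mathbb Z/2\mathbb Z\times\mathbb Z/2\mathbb Z$, and let $\sigma_1,\sigma_2\in G$ be the generators with $\sigma_1(\sqrt{a_1})=\sqrt{a_1}$, $\sigma_1(\sqrt{a_2})=-\sqrt{a_2}$, $\sigma_2(\sqrt{a_2})=\sqrt{a_2}$, $\sigma_2(\sqrt{a_1})=-\sqrt{a_1}$. Let $E_1=F(\sqrt{a_1})$, $E_2=F(\sqrt{a_2})$, $E_3=F(\sqrt{a_1a_2})$. Then the following five subsets of $E^\times$ are equal: \begin{align*} K_1&=\ker(1-\sigma_1)(1-\sigma_2)=\{e\in E^\times: e\,\sigma_1\sigma_2(e)=\sigma_1(e)\,\sigma_2(e)\},\\ K_2&=\ker(1-\sigma_1)\cdot\ker(1-\sigma_2),\\ K_3&=\langle E_1^\times,E_2^\times\rangle,\\ K_4&=\{e\in E^\times: N_{E/E_3}(e)\in F^\times\},\\ K_5&=\{e\in E^\times: N_{E/E_3}(e)\in N_{E_1/F}(E_1^\times)\cdot N_{E_2/F}(E_2^\times)\}. \end{align*}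
   Context: $\ker(1-\sigma_i)=\{e\in E^\times: e/\sigma_i(e)=1\}$. For subsets $A,B$ of a multiplicative group, $A\cdot B=\{ab:a\in A,b\in B\}$. $\langle E_1^\times,E_2^\times\rangle$ is the smallest subgroup of $E^\times$ containing $E_1^\times$ and $E_2^\times$. $N_{E/E_3}(e)=e\,\sigma_1\sigma_2(e)$ (note $\mathrm{Gal}(E/E_3)=\{\mathrm{id},\sigma_1\sigma_2\}$), and for $x\in E_i^\times$, $N_{E_i/F}(x)=x\,\bar x$ where $\bar x$ is the conjugate of $x$ over $F$ (i.e. $N_{E_i/F}(f+g\sqrt{a_i})=f^2-a_ig^2$). *)

theory Defs
  imports Main
begin

definition is_subfield :: "'a::field set \<Rightarrow> bool" where
  "is_subfield K \<longleftrightarrow> 0 \<in> K \<and> 1 \<in> K \<and>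
     (\<forall>x\<in>K. \<forall>y\<in>K. x + y \<in> K \<and> x * y \<in> K) \<and>
     (\<forall>x\<in>K. - x \<in> K \<and> inverse x \<in> K)"

definition adjoin :: "'a::field set \<Rightarrow> 'a set \<Rightarrow> 'a set" where
  "adjoin K S = \<Inter>{L. is_subfield L \<and> K \<subseteq> L \<and> S \<subseteq> L}"

definition gal_aut :: "'a::field set \<Rightarrow> 'a set \<Rightarrow> ('a \<Rightarrow> 'a) \<Rightarrow> bool" where
  "gal_aut E F \<sigma> \<longleftrightarrow> bij_betw \<sigma> E E \<and>
     (\<forall>x\<in>E. \<forall>y\<in>E. \<sigma> (x + y) = \<sigma> x + \<sigma> y \<and> \<sigma> (x * y) = \<sigma> x * \<sigma> y) \<and>
     (\<forall>f\<in>F. \<sigma> f = f)"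

definition units_of_field :: "'a::field set \<Rightarrow> 'a set" where
  "units_of_field K = K - {0}"

definition mult_subgroup_gen :: "'a::field set \<Rightarrow> 'a set" where
  "mult_subgroup_gen S = \<Inter>{H. S \<subseteq> H \<and> 1 \<in> H \<and>
      (\<forall>x\<in>H. \<forall>y\<in>H. x * y \<in> H) \<and> (\<forall>x\<in>H. inverse x \<in> H)}"

definition set_mult :: "'a::times set \<Rightarrow> 'a set \<Rightarrow> 'a set" where
  "set_mult A B = {a * b |a b. a \<in> A \<and> b \<in> B}"

text \<open>ker(1 - sigma) = {e in E^x : e / sigma(e) = 1}\<close>
definition ker1m :: "'a::field set \<Rightarrow> ('a \<Rightarrow> 'a) \<Rightarrow> 'a set" where
  "ker1m E \<sigma> = {e \<in> units_of_field E. e / \<sigma> e = 1}"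

end

theory Submission
  imports Defs
begin

text \<open>
  Every \<open>e \<in> E\<close> is \<open>x + y r1 + z r2 + w r1 r2\<close> with \<open>x, y, z, w \<in> F\<close>, and in these coordinates
  \<open>e \<sigma>1\<sigma>2(e) - \<sigma>1(e) \<sigma>2(e) = 4 (xw - yz) r1 r2\<close> while \<open>e \<sigma>1\<sigma>2(e) = c + 2 (xw - yz) r1 r2\<close>
  with \<open>c \<in> F\<close>. As \<open>2 \<noteq> 0\<close> and \<open>r1 r2 \<notin> F\<close>, both \<open>K1\<close> and \<open>K4\<close> are cut out by \<open>xw = yz\<close>,
  which is exactly the condition for \<open>e\<close> to factor as \<open>(p + q r1)(s + t r2)\<close>.
  The fixed fields of \<open>\<sigma>1, \<sigma>2\<close> are \<open>E1, E2\<close>, so \<open>K2 = E1\<^sup>\<times> E2\<^sup>\<times>\<close>, which is already a group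
  and hence equals \<open>K3\<close>. Finally, for \<open>u \<in> E1\<close> and \<open>v \<in> E2\<close> the norm of \<open>uv\<close> to \<open>E3\<close> is the
  product of the norms of \<open>u\<close> and \<open>v\<close> to \<open>F\<close>, and these lie in \<open>F\<^sup>\<times>\<close>; this gives \<open>K4 = K5\<close>.
\<close>

lemma subfield_0: "is_subfield K \<Longrightarrow> 0 \<in> K"
  and subfield_1: "is_subfield K \<Longrightarrow> 1 \<in> K"
  and subfield_add: "is_subfield K \<Longrightarrow> x \<in> K \<Longrightarrow> y \<in> K \<Longrightarrow> x + y \<in> K"
  and subfield_mult: "is_subfield K \<Longrightarrow> x \<in> K \<Longrightarrow> y \<in> K \<Longrightarrow> x * y \<in> K"
  and subfield_uminus: "is_subfield K \<Longrightarrow> x \<in> K \<Longrightarrow> - x \<in> K"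
  and subfield_inverse: "is_subfield K \<Longrightarrow> x \<in> K \<Longrightarrow> inverse x \<in> K"
  by (simp_all add: is_subfield_def)

lemma subfield_diff: "is_subfield K \<Longrightarrow> x \<in> K \<Longrightarrow> y \<in> K \<Longrightarrow> x - y \<in> K"
  by (metis subfield_add subfield_uminus diff_conv_add_uminus)

lemma subfield_divide: "is_subfield K \<Longrightarrow> x \<in> K \<Longrightarrow> y \<in> K \<Longrightarrow> x / y \<in> K"
  by (metis subfield_mult subfield_inverse divide_inverse)

lemma subfield_power: "is_subfield K \<Longrightarrow> x \<in> K \<Longrightarrow> x ^ n \<in> K"
  by (induction n) (auto intro: subfield_1 subfield_mult)

lemmas subfield_closed = subfield_0 subfield_1 subfield_add subfield_mult subfield_uminus
  subfield_inverse subfield_diff subfield_divide subfield_power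

definition quad_ext :: "'a::field set \<Rightarrow> 'a \<Rightarrow> 'a set" where
  "quad_ext K r = {p + q * r | p q. p \<in> K \<and> q \<in> K}"

lemma quad_extI: "p \<in> K \<Longrightarrow> q \<in> K \<Longrightarrow> p + q * r \<in> quad_ext K r"
  unfolding quad_ext_def by blast

lemma quad_extE:
  assumes "x \<in> quad_ext K r"
  obtains p q where "p \<in> K" "q \<in> K" "x = p + q * r"
  using assms unfolding quad_ext_def by blast

lemma quad_ext_subset: "is_subfield K \<Longrightarrow> K \<subseteq> quad_ext K r"
  using quad_extI[of _ K 0 r] by (auto intro: subfield_0)

lemma quad_ext_gen: "is_subfield K \<Longrightarrow> r \<in> quad_ext K r"
  using quad_extI[of 0 K 1 r] by (simp add: subfield_0 subfield_1)

lemma quad_ext_least: "is_subfield L \<Longrightarrow> K \<subseteq> L \<Longrightarrow> r \<in> L \<Longrightarrow> quad_ext K r \<subseteq> L"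
  by (auto elim!: quad_extE intro!: subfield_add subfield_mult)

lemma quad_ext_add:
  assumes "is_subfield K" "x \<in> quad_ext K r" "y \<in> quad_ext K r"
  shows "x + y \<in> quad_ext K r"
proof -
  obtain p q p' q' where "p \<in> K" "q \<in> K" "x = p + q * r" "p' \<in> K" "q' \<in> K" "y = p' + q' * r"
    using assms(2,3) by (elim quad_extE)
  then have "x + y = (p + p') + (q + q') * r" "p + p' \<in> K" "q + q' \<in> K"
    using assms(1) by (simp_all add: algebra_simps subfield_add)
  then show ?thesis by (simp add: quad_extI)
qed

lemma quad_ext_mult:
  assumes "is_subfield K" "r^2 \<in> K" "x \<in> quad_ext K r" "y \<in> quad_ext K r"
  shows "x * y \<in> quad_ext K r"
proof -
  obtain p q p' q' where "p \<in> K" "q \<in> K" "x = p + q * r" "p' \<in> K" "q' \<in> K" "y = p' + q' * r"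
    using assms(3,4) by (elim quad_extE)
  then have "x * y = (p * p' + q * q' * r^2) + (p * q' + q * p') * r"
    and "p * p' + q * q' * r^2 \<in> K" "p * q' + q * p' \<in> K"
    using assms(1,2) by (auto simp: algebra_simps power2_eq_square intro!: subfield_closed)
  then show ?thesis by (simp add: quad_extI)
qed

lemma quad_ext_uminus:
  assumes "is_subfield K" "x \<in> quad_ext K r"
  shows "- x \<in> quad_ext K r"
proof -
  obtain p q where "p \<in> K" "q \<in> K" "x = p + q * r"
    using assms(2) by (elim quad_extE)
  then show ?thesis
    using quad_extI[of "- p" K "- q" r] assms(1) by (simp add: subfield_uminus)
qed

lemma quad_ext_inverse:
  assumes K: "is_subfield K" and r: "r^2 \<in> K" and x: "x \<in> quad_ext K r"
  shows "inverse x \<in> quad_ext K r"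
proof -
  obtain p q where pq: "p \<in> K" "q \<in> K" "x = p + q * r"
    using x by (elim quad_extE)
  \<comment> \<open>Multiply by the conjugate \<open>x'\<close>; if \<open>x' = 0\<close> then \<open>q r = p\<close>, so \<open>x = 2p\<close> already lies in \<open>K\<close>.\<close>
  define x' where "x' = p + (- q) * r"
  have x': "x' \<in> quad_ext K r"
    unfolding x'_def using pq K by (intro quad_extI subfield_uminus)
  have norm: "x * x' \<in> K"
  proof -
    have "x * x' = p^2 - q^2 * r^2"
      unfolding x'_def pq(3) by (simp add: algebra_simps power2_eq_square)
    then show ?thesis using pq K r by (simp add: subfield_closed)
  qed
  show ?thesis
  proof (cases "x * x' = 0")
    case False
    then have "inverse x = inverse (x * x') * x'"
      by (simp add: inverse_mult_distrib)
    moreover have "inverse (x * x') \<in> quad_ext K r"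
      using norm K quad_ext_subset[OF K] subfield_inverse by blast
    ultimately show ?thesis
      using x' quad_ext_mult[OF K r] by metis
  next
    case True
    then consider "x = 0" | "x' = 0" by auto
    then show ?thesis
    proof cases
      case 1
      then show ?thesis using quad_ext_subset[OF K] subfield_0[OF K] by auto
    next
      case 2
      then have "x = p + p"
        unfolding pq(3) x'_def by (simp add: algebra_simps eq_neg_iff_add_eq_0)
      then have "x \<in> K" using pq K subfield_add by blast
      then show ?thesis using quad_ext_subset[OF K] subfield_inverse[OF K] by auto
    qed
  qed
qed

lemma subfield_quad_ext:
  assumes "is_subfield K" "r^2 \<in> K"
  shows "is_subfield (quad_ext K r)"
  unfolding is_subfield_def[of "quad_ext K r"]
proof (intro conjI ballI)
  show "0 \<in> quad_ext K r" "1 \<in> quad_ext K r"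
    using quad_ext_subset[OF assms(1)] subfield_0[OF assms(1)] subfield_1[OF assms(1)] by auto
qed (simp_all add: assms quad_ext_add quad_ext_mult quad_ext_uminus quad_ext_inverse)

lemma subfield_adjoin: "is_subfield (adjoin K S)"
  unfolding adjoin_def is_subfield_def by auto

lemma adjoin_subset: "K \<subseteq> adjoin K S"
  and adjoin_gens: "S \<subseteq> adjoin K S"
  unfolding adjoin_def by auto

lemma adjoin_least: "is_subfield L \<Longrightarrow> K \<subseteq> L \<Longrightarrow> S \<subseteq> L \<Longrightarrow> adjoin K S \<subseteq> L"
  unfolding adjoin_def by blast

lemma adjoin_insert: "adjoin K (insert r S) = adjoin (adjoin K S) {r}"
proof (rule antisym)
  show "adjoin K (insert r S) \<subseteq> adjoin (adjoin K S) {r}"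
    using adjoin_subset[of K S] adjoin_gens[of S K] adjoin_subset[of "adjoin K S" "{r}"]
      adjoin_gens[of "{r}" "adjoin K S"]
    by (intro adjoin_least subfield_adjoin) auto
  show "adjoin (adjoin K S) {r} \<subseteq> adjoin K (insert r S)"
    using adjoin_subset[of K "insert r S"] adjoin_gens[of "insert r S" K]
    by (intro adjoin_least subfield_adjoin) auto
qed

lemma adjoin_quad_ext:
  assumes "is_subfield K" "r^2 \<in> K"
  shows "adjoin K {r} = quad_ext K r"
proof (rule antisym)
  show "adjoin K {r} \<subseteq> quad_ext K r"
    using assms by (simp add: adjoin_least subfield_quad_ext quad_ext_subset quad_ext_gen)
  show "quad_ext K r \<subseteq> adjoin K {r}"
    using adjoin_subset[of K "{r}"] adjoin_gens[of "{r}" K]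
    by (intro quad_ext_least subfield_adjoin) auto
qed

lemma units_of_field_1: "is_subfield K \<Longrightarrow> 1 \<in> units_of_field K"
  and units_of_field_mult:
    "is_subfield K \<Longrightarrow> x \<in> units_of_field K \<Longrightarrow> y \<in> units_of_field K \<Longrightarrow> x * y \<in> units_of_field K"
  and units_of_field_inverse:
    "is_subfield K \<Longrightarrow> x \<in> units_of_field K \<Longrightarrow> inverse x \<in> units_of_field K"
  unfolding units_of_field_def by (auto intro: subfield_closed)

lemma set_multI: "a \<in> A \<Longrightarrow> b \<in> B \<Longrightarrow> a * b \<in> set_mult A B"
  unfolding set_mult_def by blast

lemma set_multE:
  assumes "z \<in> set_mult A B"
  obtains a b where "a \<in> A" "b \<in> B" "z = a * b"
  using assms unfolding set_mult_def by blast

text \<open>The product of two subgroups of an abelian group is already a subgroup.\<close>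
lemma mult_subgroup_gen_units_Un:
  assumes A: "is_subfield A" and B: "is_subfield B"
  shows "mult_subgroup_gen (units_of_field A \<union> units_of_field B)
           = set_mult (units_of_field A) (units_of_field B)"
    (is "mult_subgroup_gen (?U \<union> ?V) = ?P")
proof (rule antisym)
  have "?U \<subseteq> ?P"
    using set_multI[OF _ units_of_field_1[OF B]] by fastforce
  moreover have "?V \<subseteq> ?P"
    using set_multI[OF units_of_field_1[OF A]] by fastforce
  moreover have "x * y \<in> ?P" if "x \<in> ?P" "y \<in> ?P" for x y
  proof -
    obtain a b c d where "a \<in> ?U" "b \<in> ?V" "c \<in> ?U" "d \<in> ?V" "x * y = (a * c) * (b * d)"
      using \<open>x \<in> ?P\<close> \<open>y \<in> ?P\<close> by (elim set_multE) (simp add: ac_simps)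
    then show ?thesis
      by (simp add: set_multI units_of_field_mult[OF A] units_of_field_mult[OF B])
  qed
  moreover have "inverse x \<in> ?P" if "x \<in> ?P" for x
  proof -
    obtain a b where "a \<in> ?U" "b \<in> ?V" "inverse x = inverse a * inverse b"
      using \<open>x \<in> ?P\<close> by (elim set_multE) (simp add: inverse_mult_distrib)
    then show ?thesis
      by (simp add: set_multI units_of_field_inverse[OF A] units_of_field_inverse[OF B])
  qed
  moreover have "1 \<in> ?P"
    using \<open>?U \<subseteq> ?P\<close> units_of_field_1[OF A] by blast
  ultimately show "mult_subgroup_gen (?U \<union> ?V) \<subseteq> ?P"
    unfolding mult_subgroup_gen_def by (intro Inter_lower CollectI conjI ballI Un_least)
  show "?P \<subseteq> mult_subgroup_gen (?U \<union> ?V)"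
    unfolding mult_subgroup_gen_def by (auto elim!: set_multE)
qed

lemma gal_aut_add: "gal_aut E F \<sigma> \<Longrightarrow> x \<in> E \<Longrightarrow> y \<in> E \<Longrightarrow> \<sigma> (x + y) = \<sigma> x + \<sigma> y"
  and gal_aut_mult: "gal_aut E F \<sigma> \<Longrightarrow> x \<in> E \<Longrightarrow> y \<in> E \<Longrightarrow> \<sigma> (x * y) = \<sigma> x * \<sigma> y"
  and gal_aut_fixed: "gal_aut E F \<sigma> \<Longrightarrow> c \<in> F \<Longrightarrow> \<sigma> c = c"
  and gal_aut_in: "gal_aut E F \<sigma> \<Longrightarrow> x \<in> E \<Longrightarrow> \<sigma> x \<in> E"
  unfolding gal_aut_def bij_betw_def by auto

lemma gal_aut_nonzero:
  assumes "gal_aut E F \<sigma>" "0 \<in> F" "0 \<in> E" "x \<in> E" "x \<noteq> 0"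
  shows "\<sigma> x \<noteq> 0"
  using assms gal_aut_fixed[OF assms(1,2)] unfolding gal_aut_def bij_betw_def inj_on_def by metis

lemma gal_aut_biquad:
  assumes \<sigma>: "gal_aut E F \<sigma>" and E: "is_subfield E" "F \<subseteq> E" "r1 \<in> E" "r2 \<in> E"
    and coeffs: "x \<in> F" "y \<in> F" "z \<in> F" "w \<in> F"
  shows "\<sigma> (x + y * r1 + z * r2 + w * (r1 * r2)) = x + y * \<sigma> r1 + z * \<sigma> r2 + w * (\<sigma> r1 * \<sigma> r2)"
proof -
  have "x \<in> E" "y \<in> E" "z \<in> E" "w \<in> E" using coeffs E(2) by auto
  with E coeffs show ?thesis
    by (simp add: gal_aut_add[OF \<sigma>] gal_aut_mult[OF \<sigma>] gal_aut_fixed[OF \<sigma>] subfield_add subfield_mult)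
qed

locale biquadratic =
  fixes F :: "'a::field set" and r1 r2 :: 'a and \<sigma>1 \<sigma>2 :: "'a \<Rightarrow> 'a"
  assumes subfield_F: "is_subfield F"
    and two_nonzero: "(2::'a) \<noteq> 0"
    and r1_sq: "r1^2 \<in> F" and r2_sq: "r2^2 \<in> F"
    and r1_nonzero: "r1 \<noteq> 0" and r2_nonzero: "r2 \<noteq> 0"
    and gal_\<sigma>1: "gal_aut (adjoin F {r1, r2}) F \<sigma>1" and \<sigma>1_r1: "\<sigma>1 r1 = r1" and \<sigma>1_r2: "\<sigma>1 r2 = - r2"
    and gal_\<sigma>2: "gal_aut (adjoin F {r1, r2}) F \<sigma>2" and \<sigma>2_r2: "\<sigma>2 r2 = r2" and \<sigma>2_r1: "\<sigma>2 r1 = - r1"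
begin

abbreviation "E \<equiv> adjoin F {r1, r2}"
abbreviation "E1 \<equiv> adjoin F {r1}"
abbreviation "E2 \<equiv> adjoin F {r2}"

abbreviation lincomb :: "'a \<Rightarrow> 'a \<Rightarrow> 'a \<Rightarrow> 'a \<Rightarrow> 'a" where
  "lincomb x y z w \<equiv> x + y * r1 + z * r2 + w * (r1 * r2)"

lemma E1_eq: "E1 = quad_ext F r1"
  by (simp add: adjoin_quad_ext subfield_F r1_sq)

lemma E2_eq: "E2 = quad_ext F r2"
  by (simp add: adjoin_quad_ext subfield_F r2_sq)

lemma subfield_E1: "is_subfield E1"
  and subfield_E2: "is_subfield E2"
  and subfield_E: "is_subfield E"
  by (simp_all add: subfield_adjoin)

lemma E_eq: "E = quad_ext E2 r1"
proof -
  have "r1^2 \<in> E2" using r1_sq adjoin_subset[of F "{r2}"] by blast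
  then show ?thesis
    using adjoin_insert[of F r1 "{r2}"] adjoin_quad_ext[OF subfield_E2] by simp
qed

lemma F_subset_E: "F \<subseteq> E"
  and r1_in_E: "r1 \<in> E" and r2_in_E: "r2 \<in> E"
  using adjoin_subset[of F "{r1, r2}"] adjoin_gens[of "{r1, r2}" F] by auto

lemma E1_subset_E: "E1 \<subseteq> E"
  and E2_subset_E: "E2 \<subseteq> E"
  by (simp_all add: E1_eq E2_eq quad_ext_least subfield_E F_subset_E r1_in_E r2_in_E)

lemma E_lincomb_cases:
  assumes "e \<in> E"
  obtains x y z w where "x \<in> F" "y \<in> F" "z \<in> F" "w \<in> F" "e = lincomb x y z w"
proof -
  obtain A B where "A \<in> E2" "B \<in> E2" "e = A + B * r1"
    using assms unfolding E_eq by (elim quad_extE)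
  moreover obtain x z where "x \<in> F" "z \<in> F" "A = x + z * r2"
    using \<open>A \<in> E2\<close> unfolding E2_eq by (elim quad_extE)
  moreover obtain y w where "y \<in> F" "w \<in> F" "B = y + w * r2"
    using \<open>B \<in> E2\<close> unfolding E2_eq by (elim quad_extE)
  ultimately show ?thesis
    using that[of x y z w] by (simp add: algebra_simps)
qed

lemma \<sigma>1_lincomb:
  "x \<in> F \<Longrightarrow> y \<in> F \<Longrightarrow> z \<in> F \<Longrightarrow> w \<in> F \<Longrightarrow>
    \<sigma>1 (lincomb x y z w) = lincomb x y (- z) (- w)"
  using gal_aut_biquad[OF gal_\<sigma>1 subfield_E F_subset_E r1_in_E r2_in_E] by (simp add: \<sigma>1_r1 \<sigma>1_r2)

lemma \<sigma>2_lincomb: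
  "x \<in> F \<Longrightarrow> y \<in> F \<Longrightarrow> z \<in> F \<Longrightarrow> w \<in> F \<Longrightarrow>
    \<sigma>2 (lincomb x y z w) = lincomb x (- y) z (- w)"
  using gal_aut_biquad[OF gal_\<sigma>2 subfield_E F_subset_E r1_in_E r2_in_E] by (simp add: \<sigma>2_r1 \<sigma>2_r2)

lemma \<sigma>1\<sigma>2_lincomb:
  "x \<in> F \<Longrightarrow> y \<in> F \<Longrightarrow> z \<in> F \<Longrightarrow> w \<in> F \<Longrightarrow>
    \<sigma>1 (\<sigma>2 (lincomb x y z w)) = lincomb x (- y) (- z) w"
  using \<sigma>1_lincomb[of x "- y" z "- w"] by (simp add: \<sigma>2_lincomb subfield_F subfield_uminus)

lemma \<sigma>1_nonzero: "e \<in> E \<Longrightarrow> e \<noteq> 0 \<Longrightarrow> \<sigma>1 e \<noteq> 0"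
  and \<sigma>2_nonzero: "e \<in> E \<Longrightarrow> e \<noteq> 0 \<Longrightarrow> \<sigma>2 e \<noteq> 0"
  using gal_aut_nonzero[OF gal_\<sigma>1] gal_aut_nonzero[OF gal_\<sigma>2] subfield_0 subfield_F subfield_E
  by auto

lemma \<sigma>1_E1: "p \<in> F \<Longrightarrow> q \<in> F \<Longrightarrow> \<sigma>1 (p + q * r1) = p + q * r1"
  using \<sigma>1_lincomb[of p q 0 0] subfield_0[OF subfield_F] by simp

lemma \<sigma>2_E1: "p \<in> F \<Longrightarrow> q \<in> F \<Longrightarrow> \<sigma>2 (p + q * r1) = p + (- q) * r1"
  using \<sigma>2_lincomb[of p q 0 0] subfield_0[OF subfield_F] by simp

lemma \<sigma>1_E2: "p \<in> F \<Longrightarrow> q \<in> F \<Longrightarrow> \<sigma>1 (p + q * r2) = p + (- q) * r2"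
  using \<sigma>1_lincomb[of p 0 q 0] subfield_0[OF subfield_F] by simp

lemma \<sigma>2_E2: "p \<in> F \<Longrightarrow> q \<in> F \<Longrightarrow> \<sigma>2 (p + q * r2) = p + q * r2"
  using \<sigma>2_lincomb[of p 0 q 0] subfield_0[OF subfield_F] by simp

lemma \<sigma>1_fixed_iff: "e \<in> E \<Longrightarrow> \<sigma>1 e = e \<longleftrightarrow> e \<in> E1"
proof
  assume "e \<in> E" "\<sigma>1 e = e"
  then obtain x y z w where xyzw: "x \<in> F" "y \<in> F" "z \<in> F" "w \<in> F" and e: "e = lincomb x y z w"
    by (elim E_lincomb_cases)
  have "2 * ((z + w * r1) * r2) = 0"
    using \<open>\<sigma>1 e = e\<close> unfolding e \<sigma>1_lincomb[OF xyzw] by (simp add: algebra_simps)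
  then have "(z + w * r1) * r2 = 0" using two_nonzero by simp
  then have "e = x + y * r1" unfolding e by (simp add: algebra_simps)
  then show "e \<in> E1" unfolding E1_eq using xyzw by (simp add: quad_extI)
next
  assume "e \<in> E1"
  then show "\<sigma>1 e = e" unfolding E1_eq by (auto elim: quad_extE simp: \<sigma>1_E1)
qed

lemma \<sigma>2_fixed_iff: "e \<in> E \<Longrightarrow> \<sigma>2 e = e \<longleftrightarrow> e \<in> E2"
proof
  assume "e \<in> E" "\<sigma>2 e = e"
  then obtain x y z w where xyzw: "x \<in> F" "y \<in> F" "z \<in> F" "w \<in> F" and e: "e = lincomb x y z w"
    by (elim E_lincomb_cases)
  have "2 * ((y + w * r2) * r1) = 0"
    using \<open>\<sigma>2 e = e\<close> unfolding e \<sigma>2_lincomb[OF xyzw] by (simp add: algebra_simps)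
  then have "(y + w * r2) * r1 = 0" using two_nonzero by simp
  then have "e = x + z * r2" unfolding e by (simp add: algebra_simps)
  then show "e \<in> E2" unfolding E2_eq using xyzw by (simp add: quad_extI)
next
  assume "e \<in> E2"
  then show "\<sigma>2 e = e" unfolding E2_eq by (auto elim: quad_extE simp: \<sigma>2_E2)
qed

lemma ker1m_\<sigma>1: "ker1m E \<sigma>1 = units_of_field E1"
proof -
  have "e / \<sigma>1 e = 1 \<longleftrightarrow> e \<in> E1" if "e \<in> E" "e \<noteq> 0" for e
    using that \<sigma>1_fixed_iff[OF that(1)] \<sigma>1_nonzero[OF that] divide_eq_1_iff[of e "\<sigma>1 e"] by auto
  then show ?thesis
    using E1_subset_E unfolding ker1m_def units_of_field_def by auto
qed

lemma ker1m_\<sigma>2: "ker1m E \<sigma>2 = units_of_field E2"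
proof -
  have "e / \<sigma>2 e = 1 \<longleftrightarrow> e \<in> E2" if "e \<in> E" "e \<noteq> 0" for e
    using that \<sigma>2_fixed_iff[OF that(1)] \<sigma>2_nonzero[OF that] divide_eq_1_iff[of e "\<sigma>2 e"] by auto
  then show ?thesis
    using E2_subset_E unfolding ker1m_def units_of_field_def by auto
qed

lemma \<sigma>2_maps_E1: "u \<in> E1 \<Longrightarrow> \<sigma>2 u \<in> E1"
  unfolding E1_eq by (metis quad_extE quad_extI \<sigma>2_E1 subfield_uminus subfield_F)

lemma norm_E1_mem: "u \<in> units_of_field E1 \<Longrightarrow> u * \<sigma>2 u \<in> units_of_field F"
proof -
  assume u: "u \<in> units_of_field E1"
  then obtain p q where pq: "p \<in> F" "q \<in> F" "u = p + q * r1"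
    unfolding units_of_field_def E1_eq by (auto elim: quad_extE)
  then have "u * \<sigma>2 u = p^2 - q^2 * r1^2"
    by (simp add: \<sigma>2_E1 algebra_simps power2_eq_square)
  moreover have "u * \<sigma>2 u \<noteq> 0"
    using u E1_subset_E \<sigma>2_nonzero unfolding units_of_field_def by auto
  ultimately show ?thesis
    using pq r1_sq subfield_F unfolding units_of_field_def by (simp add: subfield_closed)
qed

lemma norm_E2_mem: "v \<in> units_of_field E2 \<Longrightarrow> v * \<sigma>1 v \<in> units_of_field F"
proof -
  assume v: "v \<in> units_of_field E2"
  then obtain p q where pq: "p \<in> F" "q \<in> F" "v = p + q * r2"
    unfolding units_of_field_def E2_eq by (auto elim: quad_extE)
  then have "v * \<sigma>1 v = p^2 - q^2 * r2^2"
    by (simp add: \<sigma>1_E2 algebra_simps power2_eq_square)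
  moreover have "v * \<sigma>1 v \<noteq> 0"
    using v E2_subset_E \<sigma>1_nonzero unfolding units_of_field_def by auto
  ultimately show ?thesis
    using pq r2_sq subfield_F unfolding units_of_field_def by (simp add: subfield_closed)
qed

lemma \<sigma>_mult_E1_E2:
  assumes "u \<in> E1" "v \<in> E2"
  shows "\<sigma>1 (u * v) = u * \<sigma>1 v" "\<sigma>2 (u * v) = \<sigma>2 u * v"
    and "\<sigma>1 (\<sigma>2 u * v) = \<sigma>2 u * \<sigma>1 v"
proof -
  have E: "u \<in> E" "v \<in> E" "\<sigma>2 u \<in> E" using assms E1_subset_E E2_subset_E gal_aut_in[OF gal_\<sigma>2] by auto
  have fixed: "\<sigma>1 u = u" "\<sigma>2 v = v" "\<sigma>1 (\<sigma>2 u) = \<sigma>2 u"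
    using assms E \<sigma>1_fixed_iff \<sigma>2_fixed_iff \<sigma>2_maps_E1 by auto
  show "\<sigma>1 (u * v) = u * \<sigma>1 v" "\<sigma>2 (u * v) = \<sigma>2 u * v" "\<sigma>1 (\<sigma>2 u * v) = \<sigma>2 u * \<sigma>1 v"
    using E fixed by (simp_all add: gal_aut_mult[OF gal_\<sigma>1] gal_aut_mult[OF gal_\<sigma>2])
qed

lemma norm_mult_E1_E2:
  assumes "u \<in> E1" "v \<in> E2"
  shows "(u * v) * \<sigma>1 (\<sigma>2 (u * v)) = (u * \<sigma>2 u) * (v * \<sigma>1 v)"
  unfolding \<sigma>_mult_E1_E2[OF assms] by (simp add: ac_simps)

lemma mult_E1_E2_in_ker:
  assumes "u \<in> E1" "v \<in> E2"
  shows "(u * v) * \<sigma>1 (\<sigma>2 (u * v)) = \<sigma>1 (u * v) * \<sigma>2 (u * v)"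
  unfolding \<sigma>_mult_E1_E2[OF assms] by (simp add: ac_simps)

lemma r1r2_notin_F: "r1 * r2 \<notin> F"
proof
  assume "r1 * r2 \<in> F"
  then have "\<sigma>1 (r1 * r2) = r1 * r2" by (rule gal_aut_fixed[OF gal_\<sigma>1])
  then have "2 * (r1 * r2) = 0"
    by (simp add: gal_aut_mult[OF gal_\<sigma>1] r1_in_E r2_in_E \<sigma>1_r1 \<sigma>1_r2)
  then show False using two_nonzero r1_nonzero r2_nonzero by simp
qed

lemma ker_defect_lincomb:
  assumes "x \<in> F" "y \<in> F" "z \<in> F" "w \<in> F" and e: "e = lincomb x y z w"
  shows "e * \<sigma>1 (\<sigma>2 e) - \<sigma>1 e * \<sigma>2 e = 4 * (x * w - y * z) * (r1 * r2)"
  unfolding e \<sigma>1\<sigma>2_lincomb[OF assms(1-4)]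
  unfolding \<sigma>1_lincomb[OF assms(1-4)] \<sigma>2_lincomb[OF assms(1-4)] by algebra

lemma ker_iff_det:
  assumes "x \<in> F" "y \<in> F" "z \<in> F" "w \<in> F" and "e = lincomb x y z w"
  shows "e * \<sigma>1 (\<sigma>2 e) = \<sigma>1 e * \<sigma>2 e \<longleftrightarrow> x * w = y * z"
proof -
  have "(4::'a) \<noteq> 0" using two_nonzero by (metis mult_eq_0_iff numeral_Bit0_eq_double)
  then show ?thesis
    using ker_defect_lincomb[OF assms] r1_nonzero r2_nonzero by (auto simp: right_diff_distrib)
qed

lemma norm_lincomb:
  assumes "x \<in> F" "y \<in> F" "z \<in> F" "w \<in> F" and e: "e = lincomb x y z w"
  shows "e * \<sigma>1 (\<sigma>2 e)
           = (x^2 - y^2 * r1^2 - z^2 * r2^2 + w^2 * r1^2 * r2^2) + 2 * (x * w - y * z) * (r1 * r2)"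
  unfolding e \<sigma>1\<sigma>2_lincomb[OF assms(1-4)] by algebra

lemma norm_in_F_iff_det:
  assumes xyzw: "x \<in> F" "y \<in> F" "z \<in> F" "w \<in> F" and e: "e = lincomb x y z w"
  shows "e * \<sigma>1 (\<sigma>2 e) \<in> F \<longleftrightarrow> x * w = y * z"
proof -
  define c where "c = x^2 - y^2 * r1^2 - z^2 * r2^2 + w^2 * r1^2 * r2^2"
  have c: "c \<in> F" unfolding c_def using xyzw r1_sq r2_sq subfield_F by (simp add: subfield_closed)
  have norm: "e * \<sigma>1 (\<sigma>2 e) = c + 2 * (x * w - y * z) * (r1 * r2)"
    unfolding c_def using norm_lincomb[OF assms] .
  show ?thesis
  proof
    assume N: "e * \<sigma>1 (\<sigma>2 e) \<in> F"
    show "x * w = y * z"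
    proof (rule ccontr)
      assume "x * w \<noteq> y * z"
      define d where "d = 2 * (x * w - y * z)"
      have "d \<noteq> 0" unfolding d_def using two_nonzero \<open>x * w \<noteq> y * z\<close> by simp
      then have "r1 * r2 = (e * \<sigma>1 (\<sigma>2 e) - c) / d"
        unfolding norm d_def by (simp add: field_simps)
      moreover have "d \<in> F"
        unfolding d_def using xyzw subfield_F
        by (metis one_add_one subfield_1 subfield_add subfield_mult subfield_diff)
      ultimately have "r1 * r2 \<in> F"
        using N c subfield_F by (simp add: subfield_divide subfield_diff)
      then show False using r1r2_notin_F by contradiction
    qed
  next
    assume "x * w = y * z"
    then show "e * \<sigma>1 (\<sigma>2 e) \<in> F" using norm c by simp
  qed
qed

lemma det_zero_factors:
  assumes xyzw: "x \<in> F" "y \<in> F" "z \<in> F" "w \<in> F" and det: "x * w = y * z"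
  obtains u v where "u \<in> E1" "v \<in> E2" "lincomb x y z w = u * v"
proof (cases "x = 0")
  case False
  then have "lincomb x y z w = (1 + (y / x) * r1) * (x + z * r2)"
    using det by (simp add: field_simps)
  moreover have "1 + (y / x) * r1 \<in> E1" "x + z * r2 \<in> E2"
    unfolding E1_eq E2_eq using xyzw
    by (simp_all add: quad_extI subfield_1 subfield_divide subfield_F del: times_divide_eq_left)
  ultimately show ?thesis using that by blast
next
  case True
  show ?thesis
  proof (cases "y = 0")
    case False
    with det \<open>x = 0\<close> have "lincomb x y z w = r1 * (y + w * r2)"
      by (simp add: algebra_simps)
    moreover have "r1 \<in> E1" "y + w * r2 \<in> E2"
      unfolding E1_eq E2_eq using xyzw subfield_F by (simp_all add: quad_extI quad_ext_gen)
    ultimately show ?thesis using that by blast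
  next
    case True
    with \<open>x = 0\<close> have "lincomb x y z w = (z + w * r1) * r2"
      by (simp add: algebra_simps)
    moreover have "z + w * r1 \<in> E1" "r2 \<in> E2"
      unfolding E1_eq E2_eq using xyzw subfield_F by (simp_all add: quad_extI quad_ext_gen)
    ultimately show ?thesis using that by blast
  qed
qed

lemma ker_eq_units_product:
  "{e \<in> units_of_field E. e * \<sigma>1 (\<sigma>2 e) = \<sigma>1 e * \<sigma>2 e}
     = set_mult (units_of_field E1) (units_of_field E2)"
proof (intro equalityI subsetI)
  fix e assume "e \<in> {e \<in> units_of_field E. e * \<sigma>1 (\<sigma>2 e) = \<sigma>1 e * \<sigma>2 e}"
  then have e: "e \<in> E" "e \<noteq> 0" and ker: "e * \<sigma>1 (\<sigma>2 e) = \<sigma>1 e * \<sigma>2 e"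
    by (simp_all add: units_of_field_def)
  obtain x y z w where xyzw: "x \<in> F" "y \<in> F" "z \<in> F" "w \<in> F" and e_eq: "e = lincomb x y z w"
    using e(1) by (elim E_lincomb_cases)
  have "x * w = y * z" using ker ker_iff_det[OF xyzw e_eq] by simp
  then obtain u v where "u \<in> E1" "v \<in> E2" "e = u * v"
    using det_zero_factors[OF xyzw] e_eq by metis
  with e(2) show "e \<in> set_mult (units_of_field E1) (units_of_field E2)"
    by (simp add: units_of_field_def set_multI)
next
  fix e assume "e \<in> set_mult (units_of_field E1) (units_of_field E2)"
  then obtain u v where uv: "u \<in> units_of_field E1" "v \<in> units_of_field E2" and e_eq: "e = u * v"
    by (elim set_multE)
  then have "u \<in> E1" "v \<in> E2" "u \<noteq> 0" "v \<noteq> 0" by (simp_all add: units_of_field_def)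
  then have "e \<in> units_of_field E"
    unfolding e_eq units_of_field_def using E1_subset_E E2_subset_E subfield_E
    by (auto intro: subfield_mult)
  moreover have "e * \<sigma>1 (\<sigma>2 e) = \<sigma>1 e * \<sigma>2 e"
    unfolding e_eq by (rule mult_E1_E2_in_ker) fact+
  ultimately show "e \<in> {e \<in> units_of_field E. e * \<sigma>1 (\<sigma>2 e) = \<sigma>1 e * \<sigma>2 e}" by simp
qed

lemma ker_eq_norm_in_units_F:
  "{e \<in> units_of_field E. e * \<sigma>1 (\<sigma>2 e) = \<sigma>1 e * \<sigma>2 e}
     = {e \<in> units_of_field E. e * \<sigma>1 (\<sigma>2 e) \<in> units_of_field F}"
proof -
  have "e * \<sigma>1 (\<sigma>2 e) = \<sigma>1 e * \<sigma>2 e \<longleftrightarrow> e * \<sigma>1 (\<sigma>2 e) \<in> units_of_field F"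
    if e: "e \<in> E" "e \<noteq> 0" for e
  proof -
    obtain x y z w where xyzw: "x \<in> F" "y \<in> F" "z \<in> F" "w \<in> F" and e_eq: "e = lincomb x y z w"
      using e(1) by (elim E_lincomb_cases)
    have "e * \<sigma>1 (\<sigma>2 e) \<noteq> 0"
      using e \<sigma>1_nonzero \<sigma>2_nonzero gal_aut_in[OF gal_\<sigma>2] by simp
    then show ?thesis
      using ker_iff_det[OF xyzw e_eq] norm_in_F_iff_det[OF xyzw e_eq] by (simp add: units_of_field_def)
  qed
  then show ?thesis by (auto simp: units_of_field_def)
qed

lemma norm_in_units_F_eq_norm_in_norms:
  "{e \<in> units_of_field E. e * \<sigma>1 (\<sigma>2 e) \<in> units_of_field F}
     = {e \<in> units_of_field E. e * \<sigma>1 (\<sigma>2 e) \<in>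
          set_mult ((\<lambda>x. x * \<sigma>2 x) ` units_of_field E1) ((\<lambda>x. x * \<sigma>1 x) ` units_of_field E2)}"
proof (intro equalityI subsetI)
  fix e assume e: "e \<in> {e \<in> units_of_field E. e * \<sigma>1 (\<sigma>2 e) \<in> units_of_field F}"
  then have "e \<in> set_mult (units_of_field E1) (units_of_field E2)"
    using ker_eq_norm_in_units_F ker_eq_units_product by blast
  then obtain u v where uv: "u \<in> units_of_field E1" "v \<in> units_of_field E2" "e = u * v"
    by (elim set_multE)
  then have "u \<in> E1" "v \<in> E2" by (simp_all add: units_of_field_def)
  then have "e * \<sigma>1 (\<sigma>2 e) = (u * \<sigma>2 u) * (v * \<sigma>1 v)"
    unfolding uv(3) by (rule norm_mult_E1_E2)
  also have "\<dots> \<in> set_mult ((\<lambda>x. x * \<sigma>2 x) ` units_of_field E1) ((\<lambda>x. x * \<sigma>1 x) ` units_of_field E2)"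
    using uv(1,2) by (intro set_multI imageI)
  finally show "e \<in> {e \<in> units_of_field E. e * \<sigma>1 (\<sigma>2 e) \<in>
      set_mult ((\<lambda>x. x * \<sigma>2 x) ` units_of_field E1) ((\<lambda>x. x * \<sigma>1 x) ` units_of_field E2)}"
    using e by simp
next
  fix e assume e: "e \<in> {e \<in> units_of_field E. e * \<sigma>1 (\<sigma>2 e) \<in>
      set_mult ((\<lambda>x. x * \<sigma>2 x) ` units_of_field E1) ((\<lambda>x. x * \<sigma>1 x) ` units_of_field E2)}"
  then obtain u v where "u \<in> units_of_field E1" "v \<in> units_of_field E2"
      "e * \<sigma>1 (\<sigma>2 e) = (u * \<sigma>2 u) * (v * \<sigma>1 v)"
    by (auto elim!: set_multE)
  then have "e * \<sigma>1 (\<sigma>2 e) \<in> units_of_field F"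
    using norm_E1_mem norm_E2_mem units_of_field_mult[OF subfield_F] by simp
  with e show "e \<in> {e \<in> units_of_field E. e * \<sigma>1 (\<sigma>2 e) \<in> units_of_field F}" by simp
qed

end

theorem theorem4:
  fixes F :: "'a::field set" and a1 a2 r1 r2 :: 'a
    and \<sigma>1 \<sigma>2 :: "'a \<Rightarrow> 'a"
  defines "E \<equiv> adjoin F {r1, r2}"
    and "E1 \<equiv> adjoin F {r1}"
    and "E2 \<equiv> adjoin F {r2}"
    and "E3 \<equiv> adjoin F {r1 * r2}"
  assumes F: "is_subfield F"
    and char: "(2::'a) \<noteq> 0"
    and a1: "a1 \<in> units_of_field F" and a2: "a2 \<in> units_of_field F"
    and r1: "r1 ^ 2 = a1" and r2: "r2 ^ 2 = a2"
    and s1: "gal_aut E F \<sigma>1" and s1r1: "\<sigma>1 r1 = r1" and s1r2: "\<sigma>1 r2 = - r2"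
    and s2: "gal_aut E F \<sigma>2" and s2r2: "\<sigma>2 r2 = r2" and s2r1: "\<sigma>2 r1 = - r1"
  shows
    "let K1 = {e \<in> units_of_field E. e * \<sigma>1 (\<sigma>2 e) = \<sigma>1 e * \<sigma>2 e};
         K2 = set_mult (ker1m E \<sigma>1) (ker1m E \<sigma>2);
         K3 = mult_subgroup_gen (units_of_field E1 \<union> units_of_field E2);
         K4 = {e \<in> units_of_field E. e * \<sigma>1 (\<sigma>2 e) \<in> units_of_field F};
         K5 = {e \<in> units_of_field E. e * \<sigma>1 (\<sigma>2 e) \<in>
                 set_mult ((\<lambda>x. x * \<sigma>2 x) ` units_of_field E1)
                          ((\<lambda>x. x * \<sigma>1 x) ` units_of_field E2)}
     in K1 = K2 \<and> K2 = K3 \<and> K3 = K4 \<and> K4 = K5"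
proof -
  interpret biquadratic F r1 r2 \<sigma>1 \<sigma>2
    using F char a1 a2 r1 r2 s1 s1r1 s1r2 s2 s2r2 s2r1
    by unfold_locales (auto simp: E_def units_of_field_def)
  show ?thesis
    unfolding Let_def E_def E1_def E2_def
    using ker_eq_units_product ker_eq_norm_in_units_F norm_in_units_F_eq_norm_in_norms
    by (simp add: ker1m_\<sigma>1 ker1m_\<sigma>2 mult_subgroup_gen_units_Un subfield_E1 subfield_E2)
qed

end
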